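(* Let $G$ be a finite simple graph with adjacency matrix $A$ and let $W$ be a vertex subset that induces a regular subgraph, such that every vertex outside $W$ is adjacent to exactly $|W|$, $\tfrac12|W|$ or $0$ vertices of $W$. Let $G_W$ be the graph obtained by Godsil–McKay switching with respect to $W$, with adjacency matrix $A_W$. Then $\mathrm{2\text{-}rank}(G_W)\in\{\mathrm{2\text{-}rank}(G)-2,\ \mathrm{2\text{-}rank}(G),\ \mathrm{2\text{-}rank}(G)+2\}$. Moreover, if $\mathrm{2\text{-}rank}(G_W)=\mathrm{2\text{-}rank}(G)+2$, then $\mathrm{Col}_2(A)\subset\mathrm{Col}_2(A_W)$; in particular $\mathbf{1}\in\mathrm{Col}_2(A)$ then implies $\mathbf{1}\in\mathrm{Col}_2(A_W)$.
   Context: The 2-rank of a graph is the rank over $\mathbb{F}_2$ of its adjacency matrix; $\mathrm{Col}_2(M)$ is the column space of $M$ over $\mathbb{F}_2$, and $\mathbf{1}$ is the all-ones vector. Godsil–McKay switching with respect to $W$ (under the stated hypotheses on $W$): for each vertex $v\notin W$ having exactly $\tfrac12|W|$ neighbours in $W$, delete the $\tfrac12|W|$ edges between $v$ and $W$ and join $v$ instead to the other $\tfrac12|W|$ vertices of $W$; all other adjacencies are unchanged. *)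

theory Defs
  imports "HOL-Library.Z2" "Jordan_Normal_Form.DL_Rank"
begin

definition simple_graph :: "nat \<Rightarrow> (nat \<Rightarrow> nat \<Rightarrow> bool) \<Rightarrow> bool" where
  "simple_graph n E \<longleftrightarrow> (\<forall>u v. E u v \<longrightarrow> u < n \<and> v < n) \<and>
     (\<forall>u v. E u v \<longleftrightarrow> E v u) \<and> (\<forall>v. \<not> E v v)"

definition adj_mat :: "nat \<Rightarrow> (nat \<Rightarrow> nat \<Rightarrow> bool) \<Rightarrow> bit mat" where
  "adj_mat n E = mat n n (\<lambda>(i, j). if E i j then 1 else 0)"

definition nbrs_in :: "(nat \<Rightarrow> nat \<Rightarrow> bool) \<Rightarrow> nat set \<Rightarrow> nat \<Rightarrow> nat" where
  "nbrs_in E W v = card {w \<in> W. E v w}"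

definition gm_switch :: "nat set \<Rightarrow> (nat \<Rightarrow> nat \<Rightarrow> bool) \<Rightarrow> nat \<Rightarrow> nat \<Rightarrow> bool" where
  "gm_switch W E u v =
     (if (u \<in> W \<and> v \<notin> W \<and> 2 * nbrs_in E W v = card W) \<or>
         (v \<in> W \<and> u \<notin> W \<and> 2 * nbrs_in E W u = card W)
      then \<not> E u v else E u v)"

abbreviation rank2 :: "nat \<Rightarrow> bit mat \<Rightarrow> nat" where
  "rank2 n A \<equiv> vec_space.rank n A"

abbreviation col2 :: "nat \<Rightarrow> bit mat \<Rightarrow> bit vec set" where
  "col2 n A \<equiv> vec_space.col_space n A"

end

theory Submission
  imports Defs "HOL-Library.Function_Algebras"
begin

text \<open>Over GF(2) an adjacency matrix A is symmetric with zero diagonal, so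
  (A h, A g) \<mapsto> h^T A g is a well-defined nondegenerate alternating form on its column space.
  Splitting off hyperbolic pairs shows that this space has 4^k elements: the 2-rank is even.
  Switching adds x y^T + y x^T to A, where x and y are the indicator vectors of W and of the
  switched vertices. Hence each of the two column spaces lies in the other plus span {x, y},
  and counting elements the 2-ranks differ by at most 2, so by 0 or 2. If the rank goes up by 2,
  the larger column space is all of col A + span {x, y} and so contains col A.\<close>

lemma UNIV_bit: "(UNIV :: bit set) = {0, 1}"
  using bit_not_zero_iff by blast

instance bit :: finite
  by standard (simp add: UNIV_bit)

lemma card_UNIV_bit: "card (UNIV :: bit set) = 2"
  by (simp add: UNIV_bit)

lemma bit_add_self [simp]: "(b :: bit) + b = 0"
  by (cases b) simp_all

lemma bit_eq_add_swap: "(b :: bit) = a + t \<Longrightarrow> a = b + t"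
  by (cases a; cases b; cases t) simp_all

section \<open>Nondegenerate alternating forms over GF(2)\<close>

locale gf2_symplectic_space =
  fixes C :: "'v::ab_group_add set" and form :: "'v \<Rightarrow> 'v \<Rightarrow> bit"
  assumes finite_carrier: "finite C"
    and add_self: "v \<in> C \<Longrightarrow> v + v = 0"
    and zero_in: "0 \<in> C"
    and add_in: "p \<in> C \<Longrightarrow> q \<in> C \<Longrightarrow> p + q \<in> C"
    and form_add_left: "p \<in> C \<Longrightarrow> p' \<in> C \<Longrightarrow> q \<in> C \<Longrightarrow> form (p + p') q = form p q + form p' q"
    and form_commute: "p \<in> C \<Longrightarrow> q \<in> C \<Longrightarrow> form p q = form q p"
    and form_self: "p \<in> C \<Longrightarrow> form p p = 0"
    and form_nondegenerate: "p \<in> C \<Longrightarrow> \<forall>q\<in>C. form p q = 0 \<Longrightarrow> p = 0"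
begin

lemma form_add_right: "p \<in> C \<Longrightarrow> q \<in> C \<Longrightarrow> q' \<in> C \<Longrightarrow> form p (q + q') = form p q + form p q'"
  by (metis add_in form_add_left form_commute)

lemma form_zero_right: "p \<in> C \<Longrightarrow> form p 0 = 0"
  using form_add_right[of p 0 0] zero_in by simp

definition orth2 :: "'v \<Rightarrow> 'v \<Rightarrow> 'v set" where
  "orth2 c d = {e \<in> C. form c e = 0 \<and> form d e = 0}"

definition shift :: "'v \<Rightarrow> 'v \<Rightarrow> bool \<Rightarrow> bool \<Rightarrow> 'v \<Rightarrow> 'v" where
  "shift c d a b e = e + (if a then c else 0) + (if b then d else 0)"

context
  fixes c d assumes c: "c \<in> C" and d: "d \<in> C" and cd: "form c d = 1"
begin

lemma shift_in: "e \<in> C \<Longrightarrow> shift c d a b e \<in> C"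
  unfolding shift_def using c d zero_in by (auto intro!: add_in)

lemma shift_shift: "e \<in> C \<Longrightarrow> shift c d a b (shift c d a b e) = e"
  unfolding shift_def using c d add_self by (simp add: algebra_simps)

lemma form_shift_right:
  assumes "p \<in> C" "e \<in> C"
  shows "form p (shift c d a b e) = form p e + of_bool a * form p c + of_bool b * form p d"
  using assms c d zero_in
  by (cases a; cases b) (simp_all add: shift_def form_add_right add_in form_zero_right)

lemma form_c_shift: "e \<in> C \<Longrightarrow> form c (shift c d a b e) = form c e + of_bool b"
  using form_shift_right[OF c] form_self[OF c] cd by simp

lemma form_d_shift: "e \<in> C \<Longrightarrow> form d (shift c d a b e) = form d e + of_bool a"
  using form_shift_right[OF d] form_self[OF d] cd form_commute[OF c d] by simp

text \<open>A hyperbolic pair c, d splits off: every element of C is uniquely e + a c + b d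
  with e orthogonal to c and d.\<close>
lemma bij_betw_shift: "bij_betw (\<lambda>(e, a, b). shift c d a b e) (orth2 c d \<times> UNIV \<times> UNIV) C"
proof -
  define proj where "proj g = (shift c d (form d g = 1) (form c g = 1) g, form d g = 1, form c g = 1)"
    for g
  show ?thesis
    by (rule bij_betw_byWitness[where f' = proj])
      (use bit_not_zero_iff in \<open>auto simp: proj_def orth2_def shift_in form_c_shift form_d_shift shift_shift\<close>)
qed

lemma card_eq_4_card_orth2: "card C = 4 * card (orth2 c d)"
proof -
  have "card C = card (orth2 c d \<times> (UNIV :: bool set) \<times> (UNIV :: bool set))"
    using bij_betw_same_card[OF bij_betw_shift] by simp
  then show ?thesis by (simp add: card_cartesian_product del: UNIV_Times_UNIV)
qed

lemma gf2_symplectic_space_orth2: "gf2_symplectic_space (orth2 c d) form"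
proof
  show "finite (orth2 c d)" using finite_carrier by (simp add: orth2_def)
  show "0 \<in> orth2 c d" using zero_in form_add_right[OF c zero_in zero_in]
    form_add_right[OF d zero_in zero_in] by (simp add: orth2_def)
  show "p \<in> orth2 c d \<Longrightarrow> q \<in> orth2 c d \<Longrightarrow> p + q \<in> orth2 c d" for p q
    using c d by (simp add: orth2_def add_in form_add_right)
  fix p assume p: "p \<in> orth2 c d" and orth: "\<forall>q\<in>orth2 c d. form p q = 0"
  have pC: "p \<in> C" and "form p c = 0" "form p d = 0"
    using p c d form_commute by (auto simp: orth2_def)
  have "form p g = 0" if "g \<in> C" for g
  proof -
    obtain e a b where e: "e \<in> orth2 c d" and g: "g = shift c d a b e"
      using bij_betw_shift \<open>g \<in> C\<close> unfolding bij_betw_def by force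
    then show ?thesis
      using orth pC \<open>form p c = 0\<close> \<open>form p d = 0\<close> by (simp add: form_shift_right orth2_def)
  qed
  then show "p = 0" using form_nondegenerate[OF pC] by blast
qed (auto simp: orth2_def add_self form_add_left form_commute form_self)

end

end

theorem card_gf2_symplectic_space:
  assumes "gf2_symplectic_space C form"
  shows "\<exists>k. card C = 4 ^ k"
  using assms
proof (induction "card C" arbitrary: C rule: less_induct)
  case less
  interpret gf2_symplectic_space C form by (fact less.prems)
  show ?case
  proof (cases "C = {0}")
    case True
    then show ?thesis by (intro exI[of _ 0]) simp
  next
    case False
    then obtain c where c: "c \<in> C" "c \<noteq> 0" using zero_in by auto
    then obtain d where d: "d \<in> C" "form c d = 1"
      using form_nondegenerate bit_not_zero_iff by blast
    have "card C = 4 * card (orth2 c d)" by (rule card_eq_4_card_orth2[OF c(1) d])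
    moreover have "card C > 0" using c finite_carrier card_gt_0_iff by blast
    ultimately obtain k where "card (orth2 c d) = 4 ^ k"
      using less.hyps gf2_symplectic_space_orth2[OF c(1) d] by fastforce
    with \<open>card C = 4 * card (orth2 c d)\<close> show ?thesis by (metis power_Suc)
  qed
qed

section \<open>Column spaces over finite fields\<close>

lemma (in vec_space) card_span_lin_indpt:
  assumes fin: "finite U" and U: "U \<subseteq> carrier_vec n" and li: "lin_indpt U"
  shows "card (span U) = card (UNIV :: 'a set) ^ card U"
proof -
  have span_eq: "span U = (\<lambda>a. lincomb a U) ` (U \<rightarrow>\<^sub>E UNIV)"
  proof (intro equalityI subsetI)
    fix v assume "v \<in> span U"
    then obtain a where v: "v = lincomb a U" using finite_span[OF fin U] by auto
    have "lincomb a U = lincomb (restrict a U) U" by (rule lincomb_cong) (use U in auto)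
    then show "v \<in> (\<lambda>a. lincomb a U) ` (U \<rightarrow>\<^sub>E UNIV)" using v by force
  qed (use finite_span[OF fin U] in auto)
  have "inj_on (\<lambda>a. lincomb a U) (U \<rightarrow>\<^sub>E UNIV)"
  proof (rule inj_onI)
    fix a b assume a: "a \<in> U \<rightarrow>\<^sub>E UNIV" and b: "b \<in> U \<rightarrow>\<^sub>E UNIV" and eq: "lincomb a U = lincomb b U"
    have "lincomb (\<lambda>v. a v - b v) U = lincomb a U \<ominus>\<^bsub>V\<^esub> lincomb b U"
      using lincomb_diff[OF fin U, of a b] by simp
    also have "\<dots> = 0\<^sub>v n" unfolding eq using U
      by (metis M.r_neg M.minus_eq lincomb_closed Pi_UNIV UNIV_I cV)
    finally have "lincomb (\<lambda>v. a v - b v) U = 0\<^sub>v n" .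
    then have "\<forall>v\<in>U. a v = b v"
      using li lin_dep_crit[OF fin subset_refl, where a = "\<lambda>v. a v - b v"] by auto
    then show "a = b" using a b by (metis PiE_ext)
  qed
  then have "card (span U) = card (U \<rightarrow>\<^sub>E (UNIV :: 'a set))" by (simp add: span_eq card_image)
  then show ?thesis by (simp add: card_PiE fin)
qed

lemma (in vec_space) card_col_space:
  assumes A: "A \<in> carrier_mat n nc"
  shows "card (col_space A) = card (UNIV :: 'a set) ^ rank A"
proof -
  let ?P = "\<lambda>T. T \<subseteq> set (cols A) \<and> lin_indpt T"
  have S: "set (cols A) \<subseteq> carrier_vec n" using A cols_dim by blast
  have "lin_indpt {}" by (rule finite_lin_indpt2) auto
  then obtain U where fU: "finite U" and mU: "maximal U ?P"
    using maximal_exists_superset[of "set (cols A)" ?P "{}"] by auto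
  have US: "U \<subseteq> set (cols A)" and li: "lin_indpt U" using mU unfolding maximal_def by auto
  have Uc: "U \<subseteq> carrier_vec n" using US S by auto
  have "set (cols A) \<subseteq> span U"
  proof
    fix s assume s: "s \<in> set (cols A)"
    show "s \<in> span U"
    proof (cases "s \<in> U")
      case True then show ?thesis using span_mem[OF Uc] by auto
    next
      case False
      then have "\<not> lin_indpt (U \<union> {s})" using mU s US unfolding maximal_def by blast
      then show ?thesis using lin_dep_iff_in_span[OF Uc li _ False] s S by auto
    qed
  qed
  then have "span (set (cols A)) = span U"
    using span_is_subset[OF _ span_is_submodule[OF Uc]] span_is_monotone[OF US] by auto
  then show ?thesis
    using card_span_lin_indpt[OF fU Uc li] rank_card_indpt[OF A mU] by (simp add: col_space_def)
qed

text \<open>Column spaces are also modelled as sets of functions nat \<Rightarrow> 'a vanishing from n on;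
  unlike vectors of varying dimension, these form an abelian group under pointwise addition.\<close>
definition mat_mulf :: "nat \<Rightarrow> 'a::comm_semiring_0 mat \<Rightarrow> (nat \<Rightarrow> 'a) \<Rightarrow> nat \<Rightarrow> 'a" where
  "mat_mulf n M g i = (if i < n then \<Sum>j<n. M $$ (i, j) * g j else 0)"

definition dotf :: "nat \<Rightarrow> (nat \<Rightarrow> 'a::comm_semiring_0) \<Rightarrow> (nat \<Rightarrow> 'a) \<Rightarrow> 'a" where
  "dotf n p g = (\<Sum>i<n. p i * g i)"

definition col_funs :: "nat \<Rightarrow> 'a::comm_semiring_0 mat \<Rightarrow> (nat \<Rightarrow> 'a) set" where
  "col_funs n M = range (mat_mulf n M)"

lemma mat_mulf_add: "mat_mulf n M (g + h) = mat_mulf n M g + mat_mulf n M h"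
  by (simp add: fun_eq_iff mat_mulf_def distrib_left sum.distrib)

lemma mat_mulf_zero: "mat_mulf n M 0 = 0"
  by (simp add: fun_eq_iff mat_mulf_def)

lemma mat_mulf_cong: "(\<And>j. j < n \<Longrightarrow> g j = h j) \<Longrightarrow> mat_mulf n M g = mat_mulf n M h"
  by (simp add: fun_eq_iff mat_mulf_def)

lemma dotf_add_left: "dotf n (p + q) g = dotf n p g + dotf n q g"
  by (simp add: dotf_def distrib_right sum.distrib)

lemma dotf_commute: "dotf n p g = dotf n g p"
  by (simp add: dotf_def mult.commute)

lemma dotf_mat_mulf_commute:
  assumes sym: "\<And>i j. i < n \<Longrightarrow> j < n \<Longrightarrow> M $$ (i, j) = M $$ (j, i)"
  shows "dotf n (mat_mulf n M h) g = dotf n h (mat_mulf n M g)"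
proof -
  have "dotf n (mat_mulf n M h) g = (\<Sum>i<n. \<Sum>j<n. M $$ (i, j) * h j * g i)"
    by (simp add: dotf_def mat_mulf_def sum_distrib_right)
  also have "\<dots> = (\<Sum>j<n. \<Sum>i<n. M $$ (i, j) * h j * g i)" by (rule sum.swap)
  also have "\<dots> = (\<Sum>j<n. \<Sum>i<n. h j * (M $$ (j, i) * g i))"
    using sym by (intro sum.cong refl) (simp add: ac_simps)
  also have "\<dots> = dotf n h (mat_mulf n M g)"
    by (simp add: dotf_def mat_mulf_def sum_distrib_left)
  finally show ?thesis .
qed

lemma sum_square_symmetric_bit:
  fixes f :: "nat \<Rightarrow> nat \<Rightarrow> bit"
  assumes "\<And>i j. f i j = f j i" and "\<And>i. f i i = 0"
  shows "(\<Sum>i<n. \<Sum>j<n. f i j) = 0"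
proof (induction n)
  case (Suc n)
  have "(\<Sum>j<n. f n j) = (\<Sum>i<n. f i n)" using assms(1) by (intro sum.cong) auto
  moreover have "(\<Sum>i<Suc n. \<Sum>j<Suc n. f i j)
      = (\<Sum>i<n. \<Sum>j<n. f i j) + ((\<Sum>i<n. f i n) + (\<Sum>j<n. f n j)) + f n n"
    by (simp only: sum.lessThan_Suc sum.distrib ac_simps)
  ultimately show ?case
    using Suc assms(2) by (simp only: bit_add_self add_0_left add_0_right)
qed simp

text \<open>Over GF(2) a symmetric matrix with zero diagonal is alternating: the terms of
  h^T M h pair off.\<close>
lemma dotf_mat_mulf_self_bit:
  fixes M :: "bit mat"
  assumes sym: "\<And>i j. i < n \<Longrightarrow> j < n \<Longrightarrow> M $$ (i, j) = M $$ (j, i)"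
    and diag: "\<And>i. i < n \<Longrightarrow> M $$ (i, i) = 0"
  shows "dotf n (mat_mulf n M h) h = 0"
proof -
  define f where "f i j = (if i < n \<and> j < n then h i * M $$ (i, j) * h j else 0)" for i j
  have "dotf n (mat_mulf n M h) h = (\<Sum>i<n. (\<Sum>j<n. M $$ (i, j) * h j) * h i)"
    unfolding dotf_def mat_mulf_def by (intro sum.cong refl) (simp only: lessThan_iff if_True mult.commute)
  also have "\<dots> = (\<Sum>i<n. \<Sum>j<n. f i j)"
    unfolding f_def sum_distrib_right
    by (intro sum.cong refl) (simp only: lessThan_iff if_True conj_absorb simp_thms mult_ac)
  also have "\<dots> = 0"
    by (rule sum_square_symmetric_bit) (use sym diag in \<open>auto simp: f_def ac_simps\<close>)
  finally show ?thesis .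
qed

lemma finite_col_funs: "finite (col_funs n (M :: 'a::{finite, comm_semiring_0} mat))"
proof -
  have "col_funs n M \<subseteq> {f. \<forall>i. (i \<in> {..<n} \<longrightarrow> f i \<in> UNIV) \<and> (i \<notin> {..<n} \<longrightarrow> f i = 0)}"
    by (auto simp: col_funs_def mat_mulf_def)
  moreover have "finite {f :: nat \<Rightarrow> 'a. \<forall>i. (i \<in> {..<n} \<longrightarrow> f i \<in> UNIV) \<and> (i \<notin> {..<n} \<longrightarrow> f i = 0)}"
    by (rule finite_set_of_finite_funs) simp_all
  ultimately show ?thesis by (rule finite_subset)
qed

text \<open>The form (M h, q) \<mapsto> h^T g for any g with M g = q; symmetry of M makes the choice
  of g irrelevant.\<close>
lemma gf2_symplectic_space_col_funs:
  fixes M :: "bit mat"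
  assumes sym: "\<And>i j. i < n \<Longrightarrow> j < n \<Longrightarrow> M $$ (i, j) = M $$ (j, i)"
    and diag: "\<And>i. i < n \<Longrightarrow> M $$ (i, i) = 0"
  shows "gf2_symplectic_space (col_funs n M) (\<lambda>p q. dotf n p (SOME g. mat_mulf n M g = q))"
    (is "gf2_symplectic_space _ ?form")
proof -
  have comm: "dotf n (mat_mulf n M h) g = dotf n h (mat_mulf n M g)" for h g
    by (rule dotf_mat_mulf_commute[OF sym])
  have form: "?form (mat_mulf n M h) (mat_mulf n M g) = dotf n (mat_mulf n M h) g" for h g
  proof -
    have "mat_mulf n M (SOME g'. mat_mulf n M g' = mat_mulf n M g) = mat_mulf n M g"
      by (rule someI[where x = g]) (rule refl)
    then show ?thesis by (simp add: comm)
  qed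
  show ?thesis
  proof
    show "finite (col_funs n M)" by (rule finite_col_funs)
    show "v + v = 0" for v :: "nat \<Rightarrow> bit"
      by (simp add: fun_eq_iff)
    show "0 \<in> col_funs n M" by (metis col_funs_def mat_mulf_zero rangeI)
    show "p + q \<in> col_funs n M" if "p \<in> col_funs n M" "q \<in> col_funs n M" for p q
      using that by (auto simp: col_funs_def mat_mulf_add[symmetric])
    show "?form (p + p') q = ?form p q + ?form p' q" for p p' q
      by (rule dotf_add_left)
    show "?form p q = ?form q p" if pq: "p \<in> col_funs n M" "q \<in> col_funs n M" for p q
    proof -
      obtain h g where "p = mat_mulf n M h" "q = mat_mulf n M g"
        using pq unfolding col_funs_def by blast
      then show ?thesis by (simp only: form) (metis comm dotf_commute)
    qed
    show "?form p p = 0" if "p \<in> col_funs n M" for p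
      using that by (auto simp: col_funs_def form dotf_mat_mulf_self_bit[OF sym diag])
  next
    fix p assume p: "p \<in> col_funs n M" and orth: "\<forall>q\<in>col_funs n M. ?form p q = 0"
    obtain h where h: "p = mat_mulf n M h" using p by (auto simp: col_funs_def)
    have "p i = 0" for i
    proof (cases "i < n")
      case True
      let ?e = "\<lambda>j. if j = i then 1 else 0"
      have "dotf n p ?e = 0"
        using orth form[of h ?e] by (simp add: h col_funs_def)
      then show ?thesis using True by (simp add: dotf_def if_distrib cong: if_cong)
    next
      case False
      then show ?thesis by (simp add: h mat_mulf_def)
    qed
    then show "p = 0" by (simp add: fun_eq_iff)
  qed
qed

definition fun_of_vec :: "nat \<Rightarrow> 'a::zero vec \<Rightarrow> nat \<Rightarrow> 'a" where
  "fun_of_vec n v i = (if i < n then v $ i else 0)"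

lemma fun_of_vec_mult_mat_vec:
  assumes M: "M \<in> carrier_mat n n" and u: "u \<in> carrier_vec n"
  shows "fun_of_vec n (M *\<^sub>v u) = mat_mulf n M (\<lambda>j. u $ j)"
proof
  fix i
  show "fun_of_vec n (M *\<^sub>v u) i = mat_mulf n M (\<lambda>j. u $ j) i"
    using M u by (cases "i < n") (auto simp: fun_of_vec_def mat_mulf_def scalar_prod_def
        atLeast0LessThan intro!: sum.cong)
qed

lemma inj_on_fun_of_vec: "inj_on (fun_of_vec n) (carrier_vec n)"
proof (rule inj_onI)
  fix v w assume "v \<in> carrier_vec n" "w \<in> carrier_vec n" "fun_of_vec n v = fun_of_vec n w"
  then show "v = w" by (auto simp: fun_of_vec_def fun_eq_iff intro!: eq_vecI) metis
qed

lemma col_space_subset_carrier: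
  assumes "M \<in> carrier_mat n n"
  shows "vec_space.col_space n M \<subseteq> carrier_vec n"
  using vec_space.col_space_eq[OF assms] assms by auto

lemma fun_of_vec_col_space:
  assumes M: "M \<in> carrier_mat n n"
  shows "fun_of_vec n ` vec_space.col_space n M = col_funs n M"
proof (intro equalityI subsetI)
  have cs: "vec_space.col_space n M = {y \<in> carrier_vec n. \<exists>x\<in>carrier_vec n. M *\<^sub>v x = y}"
    using vec_space.col_space_eq[OF M] M by simp
  fix q
  show "q \<in> fun_of_vec n ` vec_space.col_space n M \<Longrightarrow> q \<in> col_funs n M"
    using fun_of_vec_mult_mat_vec[OF M] by (auto simp: cs col_funs_def)
  assume "q \<in> col_funs n M"
  then obtain g where "q = mat_mulf n M g" by (auto simp: col_funs_def)
  also have "\<dots> = mat_mulf n M (\<lambda>j. vec n g $ j)" by (rule mat_mulf_cong) simp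
  also have "\<dots> = fun_of_vec n (M *\<^sub>v vec n g)" by (rule fun_of_vec_mult_mat_vec[OF M, symmetric]) simp
  finally have "q = fun_of_vec n (M *\<^sub>v vec n g)" .
  moreover have "M *\<^sub>v vec n g \<in> vec_space.col_space n M" using M by (auto simp: cs)
  ultimately show "q \<in> fun_of_vec n ` vec_space.col_space n M" by blast
qed

lemma card_col_funs:
  fixes M :: "'a::{finite, field} mat"
  assumes "M \<in> carrier_mat n n"
  shows "card (col_funs n M) = card (UNIV :: 'a set) ^ vec_space.rank n M"
proof -
  have "card (col_funs n M) = card (vec_space.col_space n M)"
    using fun_of_vec_col_space[OF assms] inj_on_fun_of_vec col_space_subset_carrier[OF assms]
    by (metis card_image inj_on_subset)
  then show ?thesis using vec_space.card_col_space[OF assms] by simp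
qed

lemma col_space_mono_col_funs:
  assumes M: "M \<in> carrier_mat n n" and M': "M' \<in> carrier_mat n n"
    and sub: "col_funs n M \<subseteq> col_funs n M'"
  shows "vec_space.col_space n M \<subseteq> vec_space.col_space n M'"
proof -
  have "fun_of_vec n ` vec_space.col_space n M \<subseteq> fun_of_vec n ` vec_space.col_space n M'"
    using sub by (simp add: fun_of_vec_col_space M M')
  then show ?thesis
    using inj_on_image_mem_iff[OF inj_on_fun_of_vec] col_space_subset_carrier[OF M]
      col_space_subset_carrier[OF M'] by blast
qed

lemma even_rank_gf2:
  fixes M :: "bit mat"
  assumes M: "M \<in> carrier_mat n n"
    and sym: "\<And>i j. i < n \<Longrightarrow> j < n \<Longrightarrow> M $$ (i, j) = M $$ (j, i)"
    and diag: "\<And>i. i < n \<Longrightarrow> M $$ (i, i) = 0"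
  shows "even (vec_space.rank n M)"
proof -
  obtain k where "card (col_funs n M) = 4 ^ k"
    using card_gf2_symplectic_space[OF gf2_symplectic_space_col_funs[OF sym diag]] by blast
  then have "(2::nat) ^ vec_space.rank n M = 2 ^ (2 * k)"
    using card_col_funs[OF M] by (simp add: power_mult card_UNIV_bit)
  then show ?thesis by simp
qed

section \<open>Symmetric rank-two updates\<close>

lemma mat_mulf_rank2_update:
  assumes upd: "\<And>i j. i < n \<Longrightarrow> j < n \<Longrightarrow> M' $$ (i, j) = M $$ (i, j) + x i * y j + y i * x j"
    and x: "\<And>i. n \<le> i \<Longrightarrow> x i = 0" and y: "\<And>i. n \<le> i \<Longrightarrow> y i = 0"
  shows "mat_mulf n M' g = mat_mulf n M g + (\<lambda>i. dotf n y g * x i + dotf n x g * y i)"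
proof
  fix i
  show "mat_mulf n M' g i = (mat_mulf n M g + (\<lambda>i. dotf n y g * x i + dotf n x g * y i)) i"
  proof (cases "i < n")
    case True
    have "mat_mulf n M' g i = (\<Sum>j<n. M $$ (i, j) * g j + x i * (y j * g j) + y i * (x j * g j))"
      using True upd by (auto simp: mat_mulf_def algebra_simps intro!: sum.cong)
    then show ?thesis
      using True by (simp add: mat_mulf_def dotf_def sum.distrib sum_distrib_left ac_simps)
  next
    case False
    then show ?thesis using x y by (simp add: mat_mulf_def)
  qed
qed

definition plus_span2 :: "(nat \<Rightarrow> 'a::semiring_0) set \<Rightarrow> (nat \<Rightarrow> 'a) \<Rightarrow> (nat \<Rightarrow> 'a) \<Rightarrow> (nat \<Rightarrow> 'a) set"
  where "plus_span2 C x y = (\<lambda>(c, a, b). c + (\<lambda>i. a * x i + b * y i)) ` (C \<times> UNIV \<times> UNIV)"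

lemma subset_plus_span2: "C \<subseteq> plus_span2 C x y"
proof
  fix c assume "c \<in> C"
  moreover have "c = (\<lambda>(c, a, b). c + (\<lambda>i. a * x i + b * y i)) (c, 0, 0)"
    by (simp add: zero_fun_def[symmetric])
  ultimately show "c \<in> plus_span2 C x y" unfolding plus_span2_def by blast
qed

lemma card_plus_span2_le:
  fixes C :: "(nat \<Rightarrow> 'a::{finite, semiring_0}) set"
  assumes "finite C"
  shows "card (plus_span2 C x y) \<le> card (UNIV :: 'a set) ^ 2 * card C"
proof -
  have "card (plus_span2 C x y) \<le> card (C \<times> (UNIV :: 'a set) \<times> (UNIV :: 'a set))"
    unfolding plus_span2_def using assms by (intro card_image_le) simp
  then show ?thesis
    by (simp add: card_cartesian_product power2_eq_square mult_ac del: UNIV_Times_UNIV)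
qed

lemma col_funs_rank2_update_subset:
  assumes "\<And>g. mat_mulf n M' g = mat_mulf n M g + (\<lambda>i. dotf n y g * x i + dotf n x g * y i)"
  shows "col_funs n M' \<subseteq> plus_span2 (col_funs n M) x y"
proof
  fix p assume "p \<in> col_funs n M'"
  then obtain g where "p = mat_mulf n M' g" by (auto simp: col_funs_def)
  then have "p = (\<lambda>(c, a, b). c + (\<lambda>i. a * x i + b * y i)) (mat_mulf n M g, dotf n y g, dotf n x g)"
    by (simp add: assms)
  then show "p \<in> plus_span2 (col_funs n M) x y"
    unfolding plus_span2_def col_funs_def by blast
qed

theorem rank_rank2_update:
  fixes M M' :: "'a::{finite, field} mat"
  assumes M: "M \<in> carrier_mat n n" and M': "M' \<in> carrier_mat n n"
    and upd: "\<And>i j. i < n \<Longrightarrow> j < n \<Longrightarrow> M' $$ (i, j) = M $$ (i, j) + x i * y j + y i * x j"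
    and x: "\<And>i. n \<le> i \<Longrightarrow> x i = 0" and y: "\<And>i. n \<le> i \<Longrightarrow> y i = 0"
  shows "vec_space.rank n M' \<le> vec_space.rank n M + 2"
    and "vec_space.rank n M' = vec_space.rank n M + 2 \<Longrightarrow>
           vec_space.col_space n M \<subseteq> vec_space.col_space n M'"
proof -
  let ?q = "card (UNIV :: 'a set)" and ?T = "plus_span2 (col_funs n M) x y"
  have q: "?q > 1"
    using card_mono[of UNIV "{0 :: 'a, 1}"] by simp
  have sub: "col_funs n M' \<subseteq> ?T"
    by (rule col_funs_rank2_update_subset[OF mat_mulf_rank2_update[OF upd x y]])
  have T: "card ?T \<le> ?q ^ (vec_space.rank n M + 2)"
    using card_plus_span2_le[OF finite_col_funs, of n M x y] card_col_funs[OF M]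
    by (simp add: power_add power2_eq_square mult_ac)
  have fin: "finite ?T"
    unfolding plus_span2_def by (intro finite_imageI finite_cartesian_product finite_col_funs) simp_all
  have "?q ^ vec_space.rank n M' \<le> ?q ^ (vec_space.rank n M + 2)"
    using card_mono[OF fin sub] card_col_funs[OF M'] T by simp
  then show "vec_space.rank n M' \<le> vec_space.rank n M + 2"
    using q by (rule power_le_imp_le_exp[rotated])
  assume "vec_space.rank n M' = vec_space.rank n M + 2"
  then have "col_funs n M' = ?T"
    using card_seteq[OF fin sub] T card_col_funs[OF M'] by simp
  then show "vec_space.col_space n M \<subseteq> vec_space.col_space n M'"
    using subset_plus_span2 col_space_mono_col_funs[OF M M'] by blast
qed

section \<open>Godsil--McKay switching\<close>

lemma adj_mat_carrier: "adj_mat n F \<in> carrier_mat n n"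
  by (simp add: adj_mat_def)

lemma index_adj_mat: "i < n \<Longrightarrow> j < n \<Longrightarrow> adj_mat n F $$ (i, j) = of_bool (F i j)"
  by (simp add: adj_mat_def)

lemma even_rank_adj_mat:
  assumes "\<And>u v. F u v \<longleftrightarrow> F v u" and "\<And>v. \<not> F v v"
  shows "even (rank2 n (adj_mat n F))"
  by (rule even_rank_gf2[OF adj_mat_carrier]) (simp_all add: index_adj_mat assms)

definition gm_switched :: "(nat \<Rightarrow> nat \<Rightarrow> bool) \<Rightarrow> nat set \<Rightarrow> nat \<Rightarrow> bool" where
  "gm_switched E W v \<longleftrightarrow> v \<notin> W \<and> 2 * nbrs_in E W v = card W"

lemma gm_switch_commute: "(\<And>u v. E u v \<longleftrightarrow> E v u) \<Longrightarrow> gm_switch W E u v \<longleftrightarrow> gm_switch W E v u"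
  by (auto simp: gm_switch_def)

lemma gm_switch_irrefl: "gm_switch W E v v \<longleftrightarrow> E v v"
  by (simp add: gm_switch_def)

lemma adj_mat_gm_switch:
  assumes "i < n" and "j < n"
  shows "adj_mat n (gm_switch W E) $$ (i, j) = adj_mat n E $$ (i, j)
           + of_bool (i \<in> W) * of_bool (gm_switched E W j) + of_bool (gm_switched E W i) * of_bool (j \<in> W)"
  using assms by (auto simp: index_adj_mat gm_switch_def gm_switched_def)

theorem mainTheorem3:
  fixes n :: nat and E :: "nat \<Rightarrow> nat \<Rightarrow> bool" and W :: "nat set"
  assumes G: "simple_graph n E"
    and W: "W \<subseteq> {0..<n}"
    and reg: "\<exists>k. \<forall>w \<in> W. nbrs_in E W w = k"
    and out: "\<forall>v \<in> {0..<n} - W. nbrs_in E W v = card W \<or> 2 * nbrs_in E W v = card W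
                                   \<or> nbrs_in E W v = 0"
  shows "int (rank2 n (adj_mat n (gm_switch W E)))
           \<in> {int (rank2 n (adj_mat n E)) - 2, int (rank2 n (adj_mat n E)),
              int (rank2 n (adj_mat n E)) + 2} \<and>
         (rank2 n (adj_mat n (gm_switch W E)) = rank2 n (adj_mat n E) + 2 \<longrightarrow>
           col2 n (adj_mat n E) \<subseteq> col2 n (adj_mat n (gm_switch W E)) \<and>
           (vec n (\<lambda>_. 1) \<in> col2 n (adj_mat n E) \<longrightarrow>
              vec n (\<lambda>_. 1) \<in> col2 n (adj_mat n (gm_switch W E))))"
proof -
  define x :: "nat \<Rightarrow> bit" where "x i = of_bool (i < n \<and> i \<in> W)" for i
  define y :: "nat \<Rightarrow> bit" where "y i = of_bool (i < n \<and> gm_switched E W i)" for i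
  let ?A = "adj_mat n E" and ?B = "adj_mat n (gm_switch W E)"
  have sym: "\<And>u v. E u v \<longleftrightarrow> E v u" and irrefl: "\<And>v. \<not> E v v"
    using G by (auto simp: simple_graph_def)
  have upd: "?B $$ (i, j) = ?A $$ (i, j) + x i * y j + y i * x j" if "i < n" "j < n" for i j
    using that by (simp add: adj_mat_gm_switch x_def y_def)
  have upd': "?A $$ (i, j) = ?B $$ (i, j) + x i * y j + y i * x j" if "i < n" "j < n" for i j
    using upd[OF that] unfolding add.assoc by (rule bit_eq_add_swap)
  have x: "x i = 0" and y: "y i = 0" if "n \<le> i" for i
    using that by (simp_all add: x_def y_def)
  note AB = rank_rank2_update[OF adj_mat_carrier adj_mat_carrier upd x y]
  note BA = rank_rank2_update[OF adj_mat_carrier adj_mat_carrier upd' x y]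
  have "even (rank2 n ?A)" and "even (rank2 n ?B)"
    using even_rank_adj_mat sym irrefl gm_switch_commute gm_switch_irrefl by metis+
  then show ?thesis
    using AB BA by (auto elim!: evenE)
qed

end
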